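(* Let $n\ge 2$, $x\in\mathbb{R}^{n+1}$ with $|x|<1$, and $p \geq 1$. Then, as symmetric 2-tensors on $S^n$, $$\frac{\nabla_{S^n}^2 |\cdot - x|^p}{|\cdot - x|^p} \geq -\frac{p}{4}\, g .$$
   Context: $S^n\subset\mathbb{R}^{n+1}$ is the unit sphere with its canonical Riemannian metric $g$; $\nabla_{S^n}^2$ is the Riemannian Hessian on $(S^n,g)$; $|\cdot|$ is the Euclidean norm, and $|\cdot-x|^p$ denotes the function $y\mapsto |y-x|^p$ on $S^n$. *)

theory Defs
  imports "HOL-Analysis.Analysis"
begin

text \<open>Unit-speed-scaled great-circle geodesic of the unit sphere through y with
  initial velocity v (v tangent at y, i.e. v \<bullet> y = 0): the geodesic of (S^n,g)
  with gamma(0) = y, gamma'(0) = v. For v = 0 it is constant.\<close>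
definition sphere_geodesic :: "'a::real_inner \<Rightarrow> 'a \<Rightarrow> real \<Rightarrow> 'a" where
  "sphere_geodesic y v t = cos (t * norm v) *\<^sub>R y + (sin (t * norm v) / norm v) *\<^sub>R v"

text \<open>Riemannian Hessian of f restricted to the unit sphere, as a quadratic form:
  Hess f (v,v) at y equals the second derivative of f along the geodesic with
  initial point y and initial velocity v.\<close>
definition sphere_hessian :: "('a::real_inner \<Rightarrow> real) \<Rightarrow> 'a \<Rightarrow> 'a \<Rightarrow> real" where
  "sphere_hessian f y v = deriv (deriv (\<lambda>t. f (sphere_geodesic y v t))) 0"

end

(* Along the great circle gamma with gamma(0) = y and gamma'(0) = v, the squared distance
   H = |gamma - x|^2 = 1 + |x|^2 - 2 gamma . x is a trigonometric polynomial with
   H'(0) = -2 v . x and H''(0) = 2 |v|^2 y . x, so the Hessian quotient of H^(p/2) at y equals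
   p (p - 2) (v . x)^2 / H^2 + p (y . x) |v|^2 / H. For p >= 1 the first coefficient is at least -p,
   and the claim reduces to Bessel's inequality (v . x)^2 <= |v|^2 (|x|^2 - (y . x)^2)
   together with 4 |x|^2 <= (1 + |x|^2)^2. *)

theory Submission
  imports Defs
begin

lemma sphere_geodesic_zero_velocity [simp]: "sphere_geodesic y 0 t = y"
  by (simp add: sphere_geodesic_def)

lemma sphere_geodesic_at_0 [simp]: "sphere_geodesic y v 0 = y"
  by (simp add: sphere_geodesic_def)

lemma sphere_hessian_zero_velocity: "sphere_hessian f y 0 = 0"
  by (simp add: sphere_hessian_def)

lemma inner_sphere_geodesic_right:
  "sphere_geodesic y v t \<bullet> x = cos (t * norm v) * (y \<bullet> x) + sin (t * norm v) / norm v * (v \<bullet> x)"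
  by (simp add: sphere_geodesic_def inner_add_left)

lemma norm_sphere_geodesic:
  fixes y v :: "'a::real_inner"
  assumes "norm y = 1" and "v \<bullet> y = 0"
  shows "norm (sphere_geodesic y v t) = 1"
proof (cases "v = 0")
  case False
  have "sphere_geodesic y v t \<bullet> sphere_geodesic y v t
      = (cos (t * norm v))\<^sup>2 * (y \<bullet> y) + (sin (t * norm v) / norm v)\<^sup>2 * (v \<bullet> v)"
    using assms(2) by (simp add: sphere_geodesic_def inner_add_left inner_add_right
        inner_commute[of y v] power2_eq_square)
  also have "\<dots> = (cos (t * norm v))\<^sup>2 + (sin (t * norm v))\<^sup>2"
    using assms(1) False by (simp add: norm_eq_1 power2_norm_eq_inner[symmetric] field_simps)
  finally show ?thesis by (simp add: norm_eq_1)
qed (use assms in simp)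

lemma bessel_inequality_orthogonal_pair:
  fixes x y v :: "'a::real_inner"
  assumes "norm y = 1" and "v \<bullet> y = 0"
  shows "(v \<bullet> x)\<^sup>2 + (y \<bullet> x)\<^sup>2 * (norm v)\<^sup>2 \<le> (norm x)\<^sup>2 * (norm v)\<^sup>2"
proof (cases "v = 0")
  case False
  define s where "s = norm v"
  have s: "s > 0" using False by (simp add: s_def)
  have yy: "y \<bullet> y = 1" and vv: "v \<bullet> v = s\<^sup>2" and yv: "y \<bullet> v = 0"
    using assms by (simp_all add: norm_eq_1 s_def power2_norm_eq_inner inner_commute)
  define w where "w = x - (y \<bullet> x) *\<^sub>R y - ((v \<bullet> x) / s\<^sup>2) *\<^sub>R v"
  have "0 \<le> w \<bullet> w" by simp
  also have "w \<bullet> w = (norm x)\<^sup>2 - (y \<bullet> x)\<^sup>2 - (v \<bullet> x)\<^sup>2 / s\<^sup>2"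
    unfolding w_def using s
    by (simp only: inner_diff_left inner_diff_right inner_scaleR_left inner_scaleR_right
        yy vv yv inner_commute[of v y] inner_commute[of x y] inner_commute[of x v]
        power2_norm_eq_inner) (simp add: power2_eq_square field_simps)
  finally have "((v \<bullet> x)\<^sup>2 / s\<^sup>2 + (y \<bullet> x)\<^sup>2) * s\<^sup>2 \<le> (norm x)\<^sup>2 * s\<^sup>2"
    by (simp add: mult_right_mono)
  moreover have "((v \<bullet> x)\<^sup>2 / s\<^sup>2 + (y \<bullet> x)\<^sup>2) * s\<^sup>2 = (v \<bullet> x)\<^sup>2 + (y \<bullet> x)\<^sup>2 * s\<^sup>2"
    using s by (simp add: field_simps)
  ultimately show ?thesis by (simp add: s_def)
qed simp

lemma deriv2_powr:
  fixes H :: "real \<Rightarrow> real"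
  assumes H': "\<And>t. (H has_real_derivative H' t) (at t)"
    and H'': "\<And>t. (H' has_real_derivative H'' t) (at t)"
    and pos: "\<And>t. H t > 0"
  shows "deriv (deriv (\<lambda>t. H t powr q)) t
    = q * (q - 1) * H t powr (q - 2) * (H' t)\<^sup>2 + q * H t powr (q - 1) * H'' t"
proof -
  have "deriv (\<lambda>t. H t powr q) t = q * (H t powr (q - 1) * H' t)" for t
    using DERIV_imp_deriv[OF DERIV_fun_powr[OF H' pos, of q]] by simp
  then have "deriv (\<lambda>t. H t powr q) = (\<lambda>t. q * (H t powr (q - 1) * H' t))" ..
  moreover have "((\<lambda>t. q * (H t powr (q - 1) * H' t)) has_real_derivative
      q * (H t powr (q - 1) * H'' t + (q - 1) * H t powr (q - 1 - real 1) * H' t * H' t)) (at t)"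
    by (intro DERIV_cmult DERIV_mult' DERIV_fun_powr[OF H' pos] H'')
  ultimately show ?thesis
    by (simp add: DERIV_imp_deriv algebra_simps power2_eq_square)
qed

lemma sphere_hessian_norm_diff_powr:
  fixes x y v :: "'a::real_inner"
  assumes y: "norm y = 1" and vy: "v \<bullet> y = 0" and "v \<noteq> 0" and x: "norm x \<noteq> 1"
  shows "sphere_hessian (\<lambda>z. norm (z - x) powr p) y v / norm (y - x) powr p
    = p * (p - 2) * (v \<bullet> x)\<^sup>2 / norm (y - x) ^ 4 + p * (y \<bullet> x) * (norm v)\<^sup>2 / (norm (y - x))\<^sup>2"
proof -
  define s where "s = norm v"
  define a where "a = y \<bullet> x"
  define c where "c = v \<bullet> x"
  have s: "s \<noteq> 0" using \<open>v \<noteq> 0\<close> by (simp add: s_def)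
  define H where "H t = (norm (sphere_geodesic y v t - x))\<^sup>2" for t
  define H' where "H' t = 2 * a * s * sin (t * s) - 2 * c * cos (t * s)" for t
  define H'' where "H'' t = 2 * a * s\<^sup>2 * cos (t * s) + 2 * c * s * sin (t * s)" for t
  have H_eq: "H = (\<lambda>t. 1 + (norm x)\<^sup>2 - 2 * (cos (t * s) * a + sin (t * s) / s * c))"
  proof
    fix t
    have "H t = (norm (sphere_geodesic y v t))\<^sup>2 + (norm x)\<^sup>2 - 2 * (sphere_geodesic y v t \<bullet> x)"
      using dot_norm_neg[of "sphere_geodesic y v t" x] by (simp add: H_def)
    then show "H t = 1 + (norm x)\<^sup>2 - 2 * (cos (t * s) * a + sin (t * s) / s * c)"
      by (simp add: norm_sphere_geodesic[OF y vy] inner_sphere_geodesic_right a_def c_def s_def)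
  qed
  have dH: "(H has_real_derivative H' t) (at t)" for t
    unfolding H_eq H'_def using s by (auto intro!: derivative_eq_intros simp: field_simps)
  have dH': "(H' has_real_derivative H'' t) (at t)" for t
    unfolding H'_def[abs_def] H''_def
    by (auto intro!: derivative_eq_intros simp: field_simps power2_eq_square)
  have pos: "H t > 0" for t
  proof -
    have "sphere_geodesic y v t \<noteq> x" using norm_sphere_geodesic[OF y vy] x by metis
    then show ?thesis by (simp add: H_def)
  qed
  have f_eq: "(\<lambda>t. norm (sphere_geodesic y v t - x) powr p) = (\<lambda>t. H t powr (p / 2))"
    by (simp add: H_def powr_powr flip: powr_numeral)
  define h where "h = H 0"
  have h: "h > 0" using pos by (simp add: h_def)
  have h_eq: "h = (norm (y - x))\<^sup>2" by (simp add: h_def H_def)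
  have "sphere_hessian (\<lambda>z. norm (z - x) powr p) y v
      = p / 2 * (p / 2 - 1) * h powr (p / 2 - 2) * (2 * c)\<^sup>2 + p / 2 * h powr (p / 2 - 1) * (2 * a * s\<^sup>2)"
    unfolding sphere_hessian_def f_eq deriv2_powr[OF dH dH' pos]
    by (simp add: h_def H'_def H''_def)
  also have "\<dots> = h powr (p / 2) * (p * (p - 2) * c\<^sup>2 / h\<^sup>2 + p * a * s\<^sup>2 / h)"
  proof -
    have powrs: "h powr (p / 2 - 2) = h powr (p / 2) / h\<^sup>2" "h powr (p / 2 - 1) = h powr (p / 2) / h"
      using h by (simp_all add: powr_diff)
    show ?thesis unfolding powrs using h by (simp add: field_simps power2_eq_square)
  qed
  moreover have "norm (y - x) powr p = h powr (p / 2)"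
    using fun_cong[OF f_eq, of 0] by (simp add: h_def)
  ultimately have "sphere_hessian (\<lambda>z. norm (z - x) powr p) y v / norm (y - x) powr p
      = p * (p - 2) * c\<^sup>2 / h\<^sup>2 + p * a * s\<^sup>2 / h"
    using h by simp
  moreover have "h\<^sup>2 = norm (y - x) ^ 4"
    by (simp add: h_eq flip: power_mult)
  ultimately show ?thesis by (simp add: h_eq a_def c_def s_def)
qed

lemma sphere_hessian_norm_diff_powr_ge:
  fixes x y v :: "'a::real_inner"
  assumes y: "norm y = 1" and vy: "v \<bullet> y = 0" and x: "norm x \<noteq> 1" and p: "p \<ge> 1"
  shows "sphere_hessian (\<lambda>z. norm (z - x) powr p) y v / norm (y - x) powr p \<ge> - (p / 4) * (norm v)\<^sup>2"
proof (cases "v = 0")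
  case False
  define s where "s = norm v"
  define a where "a = y \<bullet> x"
  define c where "c = v \<bullet> x"
  define r where "r = norm x"
  define h where "h = (norm (y - x))\<^sup>2"
  have h: "h > 0" using x y by (auto simp: h_def)
  have h_eq: "h = 1 + r\<^sup>2 - 2 * a"
    using dot_norm_neg[of y x] y by (simp add: h_def a_def r_def)
  have bessel: "c\<^sup>2 \<le> s\<^sup>2 * (r\<^sup>2 - a\<^sup>2)"
    using bessel_inequality_orthogonal_pair[OF y vy, of x]
    by (simp add: a_def c_def r_def s_def algebra_simps)
  have am_gm: "4 * r\<^sup>2 \<le> (1 + r\<^sup>2)\<^sup>2"
    using sum_squares_ge_zero[of "1 - r\<^sup>2" 0] by (simp add: power2_eq_square algebra_simps)
  \<comment> \<open>completing the square: \<open>4 a h + h\<^sup>2 = (h + 2 a)\<^sup>2 - 4 a\<^sup>2 = (1 + r\<^sup>2)\<^sup>2 - 4 a\<^sup>2\<close>\<close>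
  have "r\<^sup>2 - a\<^sup>2 \<le> a * h + h\<^sup>2 / 4"
    using am_gm unfolding h_eq by (simp add: power2_eq_square field_simps)
  from mult_left_mono[OF this, of "s\<^sup>2"] bessel
  have "0 \<le> - c\<^sup>2 + a * s\<^sup>2 * h + s\<^sup>2 * h\<^sup>2 / 4"
    by (simp add: algebra_simps)
  moreover have "- c\<^sup>2 \<le> (p - 2) * c\<^sup>2"
    using mult_right_mono[of "-1" "p - 2" "c\<^sup>2"] p by simp
  ultimately have "0 \<le> p * ((p - 2) * c\<^sup>2 + a * s\<^sup>2 * h + s\<^sup>2 * h\<^sup>2 / 4)"
    using p by simp
  then have "- (p / 4) * s\<^sup>2 \<le> p * (p - 2) * c\<^sup>2 / h\<^sup>2 + p * a * s\<^sup>2 / h"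
    using h by (simp add: field_simps power2_eq_square)
  moreover have "h\<^sup>2 = norm (y - x) ^ 4"
    by (simp add: h_def flip: power_mult)
  ultimately show ?thesis
    using sphere_hessian_norm_diff_powr[OF y vy False x]
    by (simp add: h_def a_def c_def s_def)
qed (simp add: sphere_hessian_zero_velocity)

theorem mainTheorem3:
  fixes x :: "real ^ 'n" and p :: real
  assumes "CARD('n) \<ge> 3" and "norm x < 1" and "p \<ge> 1"
  shows "\<forall>y \<in> sphere 0 1. \<forall>v. v \<bullet> y = 0 \<longrightarrow>
           sphere_hessian (\<lambda>z. norm (z - x) powr p) y v / norm (y - x) powr p
             \<ge> - (p / 4) * (norm v)\<^sup>2"
  using sphere_hessian_norm_diff_powr_ge[of _ _ x p] assms(2,3) by simp

end
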